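(* Let $R$ be an NJ-symmetric exchange ring. Then (1) $R$ is clean, and (2) $R$ is quasi-duo.
   Context: Rings are associative with identity. $N(R)$ is the set of nilpotent elements, $J(R)$ the Jacobson radical. $R$ is NJ-symmetric if for all $a,b,c\in R$, $abc\in N(R)$ implies $bac\in J(R)$. $R$ is clean if every element is a sum of an idempotent and a unit. $R$ is quasi-duo if every maximal left ideal and every maximal right ideal of $R$ is a two-sided ideal. *)

theory Defs
  imports Main
begin

text \<open>Rings are elements of a type of class ring_1 (associative, with identity, not
necessarily commutative).\<close>

definition nilpotents :: "'a::ring_1 set" where
  "nilpotents = {a. \<exists>n::nat. a ^ n = 0}"

definition left_ideal :: "'a::ring_1 set \<Rightarrow> bool" where
  "left_ideal I \<longleftrightarrow> 0 \<in> I \<and> (\<forall>x\<in>I. \<forall>y\<in>I. x + y \<in> I) \<and> (\<forall>x\<in>I. - x \<in> I)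
     \<and> (\<forall>r. \<forall>x\<in>I. r * x \<in> I)"

definition right_ideal :: "'a::ring_1 set \<Rightarrow> bool" where
  "right_ideal I \<longleftrightarrow> 0 \<in> I \<and> (\<forall>x\<in>I. \<forall>y\<in>I. x + y \<in> I) \<and> (\<forall>x\<in>I. - x \<in> I)
     \<and> (\<forall>r. \<forall>x\<in>I. x * r \<in> I)"

definition two_sided_ideal :: "'a::ring_1 set \<Rightarrow> bool" where
  "two_sided_ideal I \<longleftrightarrow> left_ideal I \<and> right_ideal I"

definition maximal_left_ideal :: "'a::ring_1 set \<Rightarrow> bool" where
  "maximal_left_ideal M \<longleftrightarrow> left_ideal M \<and> M \<noteq> UNIV \<and>
     (\<forall>I. left_ideal I \<and> M \<subseteq> I \<and> I \<noteq> UNIV \<longrightarrow> I = M)"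

definition maximal_right_ideal :: "'a::ring_1 set \<Rightarrow> bool" where
  "maximal_right_ideal M \<longleftrightarrow> right_ideal M \<and> M \<noteq> UNIV \<and>
     (\<forall>I. right_ideal I \<and> M \<subseteq> I \<and> I \<noteq> UNIV \<longrightarrow> I = M)"

definition jacobson :: "'a::ring_1 set" where
  "jacobson = \<Inter> {M. maximal_left_ideal M}"

definition is_idempotent :: "'a::ring_1 \<Rightarrow> bool" where
  "is_idempotent e \<longleftrightarrow> e * e = e"

definition is_unit :: "'a::ring_1 \<Rightarrow> bool" where
  "is_unit u \<longleftrightarrow> (\<exists>v. u * v = 1 \<and> v * u = 1)"

definition NJ_symmetric :: "'a::ring_1 itself \<Rightarrow> bool" where
  "NJ_symmetric _ \<longleftrightarrow> (\<forall>a b c :: 'a. a * b * c \<in> nilpotents \<longrightarrow> b * a * c \<in> jacobson)"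

text \<open>Exchange ring (Warfield/Nicholson elementwise form): for every a there is an
idempotent e \<in> aR with 1 - e \<in> (1 - a)R.\<close>
definition exchange_ring :: "'a::ring_1 itself \<Rightarrow> bool" where
  "exchange_ring _ \<longleftrightarrow> (\<forall>a :: 'a. \<exists>e. is_idempotent e \<and> (\<exists>r. e = a * r) \<and> (\<exists>s. 1 - e = (1 - a) * s))"

definition clean_ring :: "'a::ring_1 itself \<Rightarrow> bool" where
  "clean_ring _ \<longleftrightarrow> (\<forall>a :: 'a. \<exists>e u. is_idempotent e \<and> is_unit u \<and> a = e + u)"

definition quasi_duo :: "'a::ring_1 itself \<Rightarrow> bool" where
  "quasi_duo _ \<longleftrightarrow> (\<forall>M :: 'a set. (maximal_left_ideal M \<or> maximal_right_ideal M) \<longrightarrow> two_sided_ideal M)"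

end

theory Submission
  imports Defs
begin

text \<open>
  NJ-symmetry gives \<open>N(R) \<subseteq> J(R)\<close> (take \<open>b = c = 1\<close>), and this is all that is used.
  It makes every idempotent \<open>e\<close> central modulo \<open>J\<close>, because \<open>e x (1 - e)\<close> and \<open>(1 - e) x e\<close>
  square to zero. Hence an element \<open>u\<close> with \<open>u v \<equiv> 1 (mod J)\<close> is a unit: it has a right
  inverse \<open>w\<close>, and the idempotent \<open>1 - w u\<close> then lies in \<open>J\<close>, so it vanishes.

  Clean: the exchange property gives \<open>e = a r\<close>, \<open>1 - e = (1 - a) t\<close> with \<open>e\<close> idempotent, and
  modulo \<open>J\<close> the element \<open>e r - (1 - e) t\<close> is a right inverse of \<open>a - (1 - e)\<close>; so
  \<open>a = (1 - e) + (a - (1 - e))\<close> is clean.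

  Quasi-duo: let \<open>M\<close> be a maximal left ideal, \<open>c \<in> M\<close> and \<open>c s \<notin> M\<close>. Then
  \<open>1 - m s \<in> M\<close> for some \<open>m \<in> M\<close>. Write \<open>s m = f + u\<close> with \<open>f\<close> idempotent and \<open>u\<close> a unit.
  Since \<open>J \<subseteq> M\<close>, commuting \<open>f\<close> past \<open>u\<close> and \<open>s\<close> modulo \<open>J\<close> shows
  \<open>1 - f \<in> M\<close> and \<open>f s \<in> M\<close>, hence \<open>s \<in> M\<close>, and so \<open>c s \<in> M\<close>. Maximal right ideals are
  handled symmetrically. This needs \<open>J\<close>, defined through maximal left ideals, to lie in every
  maximal right ideal, which follows from its quasi-regular characterisation.
\<close>

section \<open>One-sided ideals\<close>

lemma left_ideal_0: "left_ideal I \<Longrightarrow> 0 \<in> I"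
  by (simp add: left_ideal_def)

lemma left_ideal_add: "left_ideal I \<Longrightarrow> x \<in> I \<Longrightarrow> y \<in> I \<Longrightarrow> x + y \<in> I"
  by (simp add: left_ideal_def)

lemma left_ideal_uminus: "left_ideal I \<Longrightarrow> x \<in> I \<Longrightarrow> - x \<in> I"
  by (simp add: left_ideal_def)

lemma left_ideal_diff: "left_ideal I \<Longrightarrow> x \<in> I \<Longrightarrow> y \<in> I \<Longrightarrow> x - y \<in> I"
  using left_ideal_add[of I x "- y"] left_ideal_uminus[of I y] by simp

lemma left_ideal_mult: "left_ideal I \<Longrightarrow> x \<in> I \<Longrightarrow> r * x \<in> I"
  by (simp add: left_ideal_def)

lemma left_ideal_eq_UNIV: "left_ideal I \<Longrightarrow> 1 \<in> I \<Longrightarrow> I = UNIV"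
  using left_ideal_mult[of I 1] by auto

lemma right_ideal_0: "right_ideal I \<Longrightarrow> 0 \<in> I"
  by (simp add: right_ideal_def)

lemma right_ideal_add: "right_ideal I \<Longrightarrow> x \<in> I \<Longrightarrow> y \<in> I \<Longrightarrow> x + y \<in> I"
  by (simp add: right_ideal_def)

lemma right_ideal_uminus: "right_ideal I \<Longrightarrow> x \<in> I \<Longrightarrow> - x \<in> I"
  by (simp add: right_ideal_def)

lemma right_ideal_diff: "right_ideal I \<Longrightarrow> x \<in> I \<Longrightarrow> y \<in> I \<Longrightarrow> x - y \<in> I"
  using right_ideal_add[of I x "- y"] right_ideal_uminus[of I y] by simp

lemma right_ideal_mult: "right_ideal I \<Longrightarrow> x \<in> I \<Longrightarrow> x * r \<in> I"
  by (simp add: right_ideal_def)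

lemma right_ideal_eq_UNIV: "right_ideal I \<Longrightarrow> 1 \<in> I \<Longrightarrow> I = UNIV"
  using right_ideal_mult[of I 1] by auto

lemma left_ideal_add_principal:
  assumes M: "left_ideal M"
  shows "left_ideal {m + t * x | m t. m \<in> M}" (is "left_ideal ?I")
  unfolding left_ideal_def
proof (intro conjI ballI allI)
  have "(0::'a) = 0 + 0 * x" by simp
  then show "0 \<in> ?I" using left_ideal_0[OF M] by blast
next
  fix a b assume "a \<in> ?I" "b \<in> ?I"
  then obtain m1 t1 m2 t2 where "a = m1 + t1 * x" "b = m2 + t2 * x" "m1 \<in> M" "m2 \<in> M"
    by blast
  then have "a + b = (m1 + m2) + (t1 + t2) * x" "m1 + m2 \<in> M"
    using left_ideal_add[OF M] by (auto simp: algebra_simps)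
  then show "a + b \<in> ?I" by blast
next
  fix a assume "a \<in> ?I"
  then obtain m t where "a = m + t * x" "m \<in> M" by blast
  then have "- a = - m + (- t) * x" "- m \<in> M"
    using left_ideal_uminus[OF M] by auto
  then show "- a \<in> ?I" by blast
next
  fix r a assume "a \<in> ?I"
  then obtain m t where "a = m + t * x" "m \<in> M" by blast
  then have "r * a = r * m + (r * t) * x" "r * m \<in> M"
    using left_ideal_mult[OF M] by (auto simp: distrib_left mult.assoc)
  then show "r * a \<in> ?I" by blast
qed

lemma left_ideal_principal: "left_ideal {t * a | t. True}"
proof -
  have "left_ideal {m + t * a | m t. m \<in> {0}}"
    by (rule left_ideal_add_principal) (simp add: left_ideal_def)
  moreover have "{m + t * a | m t. m \<in> {0}} = {t * a | t. True}" by auto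
  ultimately show ?thesis by (simp only:)
qed

lemma right_ideal_add_principal:
  assumes M: "right_ideal M"
  shows "right_ideal {m + x * t | m t. m \<in> M}" (is "right_ideal ?I")
  unfolding right_ideal_def
proof (intro conjI ballI allI)
  have "(0::'a) = 0 + x * 0" by simp
  then show "0 \<in> ?I" using right_ideal_0[OF M] by blast
next
  fix a b assume "a \<in> ?I" "b \<in> ?I"
  then obtain m1 t1 m2 t2 where "a = m1 + x * t1" "b = m2 + x * t2" "m1 \<in> M" "m2 \<in> M"
    by blast
  then have "a + b = (m1 + m2) + x * (t1 + t2)" "m1 + m2 \<in> M"
    using right_ideal_add[OF M] by (auto simp: algebra_simps)
  then show "a + b \<in> ?I" by blast
next
  fix a assume "a \<in> ?I"
  then obtain m t where "a = m + x * t" "m \<in> M" by blast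
  then have "- a = - m + x * (- t)" "- m \<in> M"
    using right_ideal_uminus[OF M] by auto
  then show "- a \<in> ?I" by blast
next
  fix r a assume "a \<in> ?I"
  then obtain m t where "a = m + x * t" "m \<in> M" by blast
  then have "a * r = m * r + x * (t * r)" "m * r \<in> M"
    using right_ideal_mult[OF M] by (auto simp: algebra_simps)
  then show "a * r \<in> ?I" by blast
qed

lemma maximal_left_ideal_add_principal:
  assumes max: "maximal_left_ideal M" and "x \<notin> M"
  shows "\<exists>m\<in>M. \<exists>t. m + t * x = 1"
proof -
  let ?I = "{m + t * x | m t. m \<in> M}"
  have M: "left_ideal M" using max by (simp add: maximal_left_ideal_def)
  have "M \<subseteq> ?I"
  proof
    fix m assume "m \<in> M"
    moreover have "m = m + 0 * x" by simp
    ultimately show "m \<in> ?I" by blast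
  qed
  have "x \<in> ?I"
  proof -
    have "x = 0 + 1 * x" by simp
    with left_ideal_0[OF M] show ?thesis by blast
  qed
  have "?I = UNIV"
  proof (rule ccontr)
    assume "?I \<noteq> UNIV"
    with max left_ideal_add_principal[OF M] \<open>M \<subseteq> ?I\<close> have "?I = M"
      unfolding maximal_left_ideal_def by blast
    with \<open>x \<in> ?I\<close> \<open>x \<notin> M\<close> show False by blast
  qed
  then have "1 \<in> ?I" by (simp only: UNIV_I)
  then show ?thesis by auto
qed

lemma maximal_right_ideal_add_principal:
  assumes max: "maximal_right_ideal M" and "x \<notin> M"
  shows "\<exists>m\<in>M. \<exists>t. m + x * t = 1"
proof -
  let ?I = "{m + x * t | m t. m \<in> M}"
  have M: "right_ideal M" using max by (simp add: maximal_right_ideal_def)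
  have "M \<subseteq> ?I"
  proof
    fix m assume "m \<in> M"
    moreover have "m = m + x * 0" by simp
    ultimately show "m \<in> ?I" by blast
  qed
  have "x \<in> ?I"
  proof -
    have "x = 0 + x * 1" by simp
    with right_ideal_0[OF M] show ?thesis by blast
  qed
  have "?I = UNIV"
  proof (rule ccontr)
    assume "?I \<noteq> UNIV"
    with max right_ideal_add_principal[OF M] \<open>M \<subseteq> ?I\<close> have "?I = M"
      unfolding maximal_right_ideal_def by blast
    with \<open>x \<in> ?I\<close> \<open>x \<notin> M\<close> show False by blast
  qed
  then have "1 \<in> ?I" by (simp only: UNIV_I)
  then show ?thesis by auto
qed

lemma left_ideal_Union_chain:
  assumes "C \<noteq> {}" and "\<And>I. I \<in> C \<Longrightarrow> left_ideal I"
    and chain: "\<And>I J. I \<in> C \<Longrightarrow> J \<in> C \<Longrightarrow> I \<subseteq> J \<or> J \<subseteq> I"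
  shows "left_ideal (\<Union>C)"
  unfolding left_ideal_def
proof (intro conjI ballI allI)
  show "0 \<in> \<Union>C" using assms(1,2) left_ideal_0 by blast
next
  fix a b assume "a \<in> \<Union>C" "b \<in> \<Union>C"
  then obtain I J where "I \<in> C" "J \<in> C" "a \<in> I" "b \<in> J" by blast
  with chain[of I J] show "a + b \<in> \<Union>C"
    using assms(2) left_ideal_add by blast
qed (use assms(2) left_ideal_uminus left_ideal_mult in blast)+

lemma maximal_left_ideal_superset:
  assumes "left_ideal I" and "1 \<notin> I"
  shows "\<exists>M. maximal_left_ideal M \<and> I \<subseteq> M"
proof -
  let ?A = "{J. left_ideal J \<and> I \<subseteq> J \<and> 1 \<notin> J}"
  have "\<exists>M\<in>?A. \<forall>J\<in>?A. M \<subseteq> J \<longrightarrow> J = M"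
  proof (rule subset_Zorn_nonempty)
    show "?A \<noteq> {}" using assms by blast
  next
    fix C assume "C \<noteq> {}" and "subset.chain ?A C"
    then have "C \<subseteq> ?A" and "\<forall>X\<in>C. \<forall>Y\<in>C. X \<subseteq> Y \<or> Y \<subseteq> X"
      by (simp_all add: subset_chain_def)
    with \<open>C \<noteq> {}\<close> have "left_ideal (\<Union>C)"
      by (intro left_ideal_Union_chain) blast+
    moreover have "I \<subseteq> \<Union>C" "1 \<notin> \<Union>C"
      using \<open>C \<noteq> {}\<close> \<open>C \<subseteq> ?A\<close> by blast+
    ultimately show "\<Union>C \<in> ?A" by simp
  qed
  then obtain M where "left_ideal M" "I \<subseteq> M" "1 \<notin> M"
    and max: "\<forall>J\<in>?A. M \<subseteq> J \<longrightarrow> J = M" by blast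
  have "maximal_left_ideal M"
    unfolding maximal_left_ideal_def
  proof (intro conjI allI impI)
    show "left_ideal M" by fact
    show "M \<noteq> UNIV" using \<open>1 \<notin> M\<close> by blast
  next
    fix J assume J: "left_ideal J \<and> M \<subseteq> J \<and> J \<noteq> UNIV"
    then have "1 \<notin> J" using left_ideal_eq_UNIV by blast
    with J \<open>I \<subseteq> M\<close> have "J \<in> ?A" by blast
    with max J show "J = M" by blast
  qed
  with \<open>I \<subseteq> M\<close> show ?thesis by blast
qed

section \<open>The Jacobson radical\<close>

lemma mem_jacobson_iff: "x \<in> jacobson \<longleftrightarrow> (\<forall>r. \<exists>c. c * (1 - r * x) = 1)"
proof
  assume x: "x \<in> jacobson"
  show "\<forall>r. \<exists>c. c * (1 - r * x) = 1"
  proof (rule allI, rule ccontr)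
    fix r assume "\<nexists>c. c * (1 - r * x) = 1"
    then have "1 \<notin> {t * (1 - r * x) | t. True}" by force
    then obtain M where M: "maximal_left_ideal M" and sub: "{t * (1 - r * x) | t. True} \<subseteq> M"
      using maximal_left_ideal_superset[OF left_ideal_principal] by blast
    have L: "left_ideal M" using M by (simp add: maximal_left_ideal_def)
    have "1 - r * x \<in> M"
    proof -
      have "1 - r * x = 1 * (1 - r * x)" by simp
      with sub show ?thesis by blast
    qed
    moreover have "r * x \<in> M"
      using x M left_ideal_mult[OF L] unfolding jacobson_def by blast
    ultimately have "(1 - r * x) + r * x \<in> M" by (rule left_ideal_add[OF L])
    then have "M = UNIV" using left_ideal_eq_UNIV[OF L] by simp
    with M show False by (simp add: maximal_left_ideal_def)
  qed
next
  assume quasireg: "\<forall>r. \<exists>c. c * (1 - r * x) = 1"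
  show "x \<in> jacobson"
    unfolding jacobson_def
  proof (rule InterI, rule ccontr)
    fix M assume "M \<in> {M. maximal_left_ideal M}" and "x \<notin> M"
    then have M: "maximal_left_ideal M" by simp
    then have L: "left_ideal M" by (simp add: maximal_left_ideal_def)
    obtain m t where "m \<in> M" "m + t * x = 1"
      using maximal_left_ideal_add_principal[OF M \<open>x \<notin> M\<close>] by blast
    then have "1 - t * x \<in> M" by (metis add_diff_cancel_right')
    moreover obtain c where "c * (1 - t * x) = 1" using quasireg by blast
    ultimately have "1 \<in> M" using left_ideal_mult[OF L] by metis
    with M L show False by (simp add: maximal_left_ideal_def left_ideal_eq_UNIV)
  qed
qed

lemma left_ideal_jacobson: "left_ideal jacobson"
  unfolding left_ideal_def jacobson_def maximal_left_ideal_def by auto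

lemma jacobson_mult_right:
  assumes "x \<in> jacobson" shows "x * s \<in> jacobson"
  unfolding mem_jacobson_iff
proof
  fix r
  obtain c where c: "c * (1 - (s * r) * x) = 1"
    using assms unfolding mem_jacobson_iff by blast
  have "(1 + r * x * c * s) * (1 - r * (x * s)) = 1 - r * x * s + r * x * (c * (1 - (s * r) * x)) * s"
    by (simp add: algebra_simps)
  also have "\<dots> = 1" unfolding c by simp
  finally show "\<exists>c. c * (1 - r * (x * s)) = 1" by blast
qed

lemma right_ideal_jacobson: "right_ideal jacobson"
  using left_ideal_jacobson jacobson_mult_right
  unfolding left_ideal_def right_ideal_def by blast

lemma is_unit_one_minus_jacobson:
  assumes "x \<in> jacobson" shows "is_unit (1 - x)"
proof -
  obtain c where c: "c * (1 - x) = 1"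
    using assms unfolding mem_jacobson_iff by (metis mult_1)
  obtain d where d: "d * (1 - (- c) * x) = 1"
    using assms unfolding mem_jacobson_iff by blast
  have "1 - (- c) * x = c" using c by (simp add: algebra_simps)
  with d have dc: "d * c = 1" by simp
  have "d = d * (c * (1 - x))" by (simp add: c)
  also have "\<dots> = 1 - x" by (simp add: dc flip: mult.assoc)
  finally show ?thesis using c dc unfolding is_unit_def by blast
qed

lemma jacobson_subset_maximal_right_ideal:
  fixes M :: "'a::ring_1 set"
  assumes M: "maximal_right_ideal M" shows "jacobson \<subseteq> M"
proof
  fix x :: 'a assume x: "x \<in> jacobson"
  have R: "right_ideal M" using M by (simp add: maximal_right_ideal_def)
  show "x \<in> M"
  proof (rule ccontr)
    assume "x \<notin> M"
    then obtain m t where "m \<in> M" "m + x * t = 1"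
      using maximal_right_ideal_add_principal[OF M] by blast
    then have "1 - x * t \<in> M" by (metis add_diff_cancel_right')
    moreover obtain v where "(1 - x * t) * v = 1"
      using is_unit_one_minus_jacobson[OF jacobson_mult_right[OF x]]
      unfolding is_unit_def by blast
    ultimately have "1 \<in> M" using right_ideal_mult[OF R] by metis
    with M R show False by (simp add: maximal_right_ideal_def right_ideal_eq_UNIV)
  qed
qed

lemma idempotent_in_jacobson_eq_0:
  assumes "e * e = e" and "e \<in> jacobson" shows "e = 0"
proof -
  obtain v where "v * (1 - e) = 1"
    using is_unit_one_minus_jacobson[OF assms(2)] unfolding is_unit_def by blast
  then have "e = v * ((1 - e) * e)" by (metis mult.assoc mult_1)
  with assms(1) show ?thesis by (simp add: algebra_simps)
qed

section \<open>Rings whose nilpotents lie in the Jacobson radical\<close>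

lemma nilpotents_subset_jacobson:
  assumes "NJ_symmetric TYPE('a::ring_1)"
  shows "nilpotents \<subseteq> (jacobson :: 'a set)"
proof
  fix n :: 'a assume "n \<in> nilpotents"
  then have "n * 1 * 1 \<in> nilpotents" by simp
  with assms have "1 * n * 1 \<in> jacobson" unfolding NJ_symmetric_def by blast
  then show "n \<in> jacobson" by simp
qed

lemma idempotent_commutator_in_jacobson:
  fixes e :: "'a::ring_1"
  assumes N: "nilpotents \<subseteq> (jacobson :: 'a set)" and e: "e * e = e"
  shows "e * x - x * e \<in> jacobson"
proof -
  have square_zero: "a \<in> jacobson" if "a * a = 0" for a :: 'a
  proof -
    from that have "a ^ 2 = 0" by (simp add: power2_eq_square)
    with N show ?thesis unfolding nilpotents_def by blast
  qed
  have "(1 - e) * e = 0" "e * (1 - e) = 0" using e by (simp_all add: algebra_simps)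
  moreover have "(e * x * (1 - e)) * (e * x * (1 - e)) = e * x * ((1 - e) * e) * x * (1 - e)"
    and "((1 - e) * x * e) * ((1 - e) * x * e) = (1 - e) * x * (e * (1 - e)) * x * e"
    by (simp_all add: mult.assoc)
  ultimately have "e * x * (1 - e) \<in> jacobson" "(1 - e) * x * e \<in> jacobson"
    by (simp_all add: square_zero)
  moreover have "e * x - x * e = e * x * (1 - e) - (1 - e) * x * e"
    by (simp add: algebra_simps)
  ultimately show ?thesis using left_ideal_diff[OF left_ideal_jacobson] by simp
qed

lemma is_unit_if_right_inverse_mod_jacobson:
  fixes u :: "'a::ring_1"
  assumes N: "nilpotents \<subseteq> (jacobson :: 'a set)" and uv: "u * v - 1 \<in> jacobson"
  shows "is_unit u"
proof -
  have "1 - u * v \<in> jacobson"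
    using left_ideal_uminus[OF left_ideal_jacobson uv] by simp
  then obtain k where "u * v * k = 1"
    using is_unit_one_minus_jacobson unfolding is_unit_def by fastforce
  define w where "w = v * k"
  have uw: "u * w = 1" using \<open>u * v * k = 1\<close> by (simp add: w_def mult.assoc)
  define g where "g = 1 - w * u"
  have "w * u * (w * u) = w * (u * w) * u" by (simp add: mult.assoc)
  then have "g * g = g" by (simp add: g_def uw algebra_simps)
  have "u * g = 0" by (simp add: g_def algebra_simps uw flip: mult.assoc)
  have "g = (g * u - u * g) * w" by (simp add: \<open>u * g = 0\<close> uw mult.assoc)
  also have "\<dots> \<in> jacobson"
    using right_ideal_mult[OF right_ideal_jacobson]
      idempotent_commutator_in_jacobson[OF N \<open>g * g = g\<close>] by blast
  finally have "g = 0" using idempotent_in_jacobson_eq_0 \<open>g * g = g\<close> by blast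
  then have "w * u = 1" by (simp add: g_def)
  with uw show ?thesis unfolding is_unit_def by blast
qed

lemma clean_ring_if_exchange_ring:
  assumes N: "nilpotents \<subseteq> (jacobson :: 'a::ring_1 set)" and "exchange_ring TYPE('a)"
  shows "clean_ring TYPE('a)"
  unfolding clean_ring_def
proof
  fix y :: 'a
  obtain e r t where e: "e * e = e" and er: "e = y * r" and et: "1 - e = (1 - y) * t"
    using assms(2) unfolding exchange_ring_def is_idempotent_def by blast
  have "(y - 1 + e) * (e * r - (1 - e) * t) - 1 - (y * e - e * y) * (r + t)
      = (1 - e) * ((1 - y) * t - (1 - e)) + e * (y * r - e) + (e * e - e) * (1 + r + t) + (e * e - e)"
    by (simp add: algebra_simps)
  with e er et have "(y - 1 + e) * (e * r - (1 - e) * t) - 1 = (y * e - e * y) * (r + t)"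
    by simp
  moreover have "y * e - e * y \<in> jacobson"
    using left_ideal_uminus[OF left_ideal_jacobson idempotent_commutator_in_jacobson[OF N e]]
    by simp
  ultimately have "is_unit (y - 1 + e)"
    using is_unit_if_right_inverse_mod_jacobson[OF N] right_ideal_mult[OF right_ideal_jacobson]
    by metis
  moreover have "is_idempotent (1 - e)"
    using e unfolding is_idempotent_def by (simp add: algebra_simps)
  moreover have "y = (1 - e) + (y - 1 + e)" by simp
  ultimately show "\<exists>f u. is_idempotent f \<and> is_unit u \<and> y = f + u" by blast
qed

lemma mem_left_ideal_if_one_minus_mult_mem:
  fixes M :: "'a::ring_1 set"
  assumes N: "nilpotents \<subseteq> (jacobson :: 'a set)" and clean: "clean_ring TYPE('a)"
    and L: "left_ideal M" and J: "jacobson \<subseteq> M" and "m \<in> M" and "1 - m * s \<in> M"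
  shows "s \<in> M"
proof -
  obtain f u where f: "f * f = f" and "is_unit u" and sm: "s * m = f + u"
    using clean unfolding clean_ring_def is_idempotent_def by metis
  then obtain u' where "u' * u = 1" unfolding is_unit_def by blast
  then have u': "z = u' * (u * z)" for z by (simp flip: mult.assoc)
  have ff: "f * (f * z) = f * z" for z by (simp add: f flip: mult.assoc)
  from sm have u: "u = s * m - f" by simp
  have fu: "f * u - u * f \<in> M" using idempotent_commutator_in_jacobson[OF N f] J by blast
  have "u * (1 - f) = (1 - f) * s * m + (f * u - u * f)"
    unfolding u by (simp add: algebra_simps f ff)
  moreover have "(1 - f) * s * m + (f * u - u * f) \<in> M"
    using left_ideal_add[OF L] left_ideal_mult[OF L \<open>m \<in> M\<close>] fu by blast
  ultimately have "1 - f \<in> M" using left_ideal_mult[OF L] u' by metis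
  have "u * (f * s) = - (f * s * (1 - m * s)) - (f * u - u * f) * s"
    unfolding u by (simp add: algebra_simps f ff)
  moreover have "- (f * s * (1 - m * s)) - (f * u - u * f) * s \<in> M"
    using left_ideal_diff[OF L] left_ideal_uminus[OF L] left_ideal_mult[OF L \<open>1 - m * s \<in> M\<close>]
      J right_ideal_mult[OF right_ideal_jacobson idempotent_commutator_in_jacobson[OF N f]]
    by blast
  ultimately have "f * s \<in> M" using left_ideal_mult[OF L] u' by metis
  have "(1 - f) * s = s * (1 - f) - (f * s - s * f)" by (simp add: algebra_simps)
  also have "\<dots> \<in> M"
    using left_ideal_diff[OF L] left_ideal_mult[OF L \<open>1 - f \<in> M\<close>]
      idempotent_commutator_in_jacobson[OF N f] J by blast
  finally have "(1 - f) * s \<in> M" .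
  with \<open>f * s \<in> M\<close> have "f * s + (1 - f) * s \<in> M" by (rule left_ideal_add[OF L])
  then show "s \<in> M" by (simp add: algebra_simps)
qed

lemma mem_right_ideal_if_one_minus_mult_mem:
  fixes M :: "'a::ring_1 set"
  assumes N: "nilpotents \<subseteq> (jacobson :: 'a set)" and clean: "clean_ring TYPE('a)"
    and R: "right_ideal M" and J: "jacobson \<subseteq> M" and "m \<in> M" and "1 - s * m \<in> M"
  shows "s \<in> M"
proof -
  obtain f u where f: "f * f = f" and "is_unit u" and ms: "m * s = f + u"
    using clean unfolding clean_ring_def is_idempotent_def by metis
  then obtain u' where "u * u' = 1" unfolding is_unit_def by blast
  then have u': "z = z * u * u'" for z by (simp add: mult.assoc)
  have ff: "z * f * f = z * f" for z by (simp add: f mult.assoc)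
  from ms have u: "u = m * s - f" by simp
  have fu: "f * u - u * f \<in> M" using idempotent_commutator_in_jacobson[OF N f] J by blast
  have "(1 - f) * u = m * (s * (1 - f)) - (f * u - u * f)"
    unfolding u by (simp add: algebra_simps f ff)
  moreover have "m * (s * (1 - f)) - (f * u - u * f) \<in> M"
    using right_ideal_diff[OF R] right_ideal_mult[OF R \<open>m \<in> M\<close>] fu by blast
  ultimately have "1 - f \<in> M" using right_ideal_mult[OF R] u' by metis
  have "s * f * u = - ((1 - s * m) * (s * f)) + s * (f * u - u * f)"
    unfolding u by (simp add: algebra_simps f ff)
  moreover have "- ((1 - s * m) * (s * f)) + s * (f * u - u * f) \<in> M"
    using right_ideal_add[OF R] right_ideal_uminus[OF R] right_ideal_mult[OF R \<open>1 - s * m \<in> M\<close>]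
      J left_ideal_mult[OF left_ideal_jacobson idempotent_commutator_in_jacobson[OF N f]]
    by blast
  ultimately have "s * f \<in> M" using right_ideal_mult[OF R] u' by metis
  have "s * (1 - f) = (1 - f) * s + (f * s - s * f)" by (simp add: algebra_simps)
  also have "\<dots> \<in> M"
    using right_ideal_add[OF R] right_ideal_mult[OF R \<open>1 - f \<in> M\<close>]
      idempotent_commutator_in_jacobson[OF N f] J by blast
  finally have "s * (1 - f) \<in> M" .
  with \<open>s * f \<in> M\<close> have "s * f + s * (1 - f) \<in> M" by (rule right_ideal_add[OF R])
  then show "s \<in> M" by (simp add: algebra_simps)
qed

lemma maximal_left_ideal_two_sided:
  fixes M :: "'a::ring_1 set"
  assumes N: "nilpotents \<subseteq> (jacobson :: 'a set)" and clean: "clean_ring TYPE('a)"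
    and max: "maximal_left_ideal M"
  shows "two_sided_ideal M"
proof -
  have L: "left_ideal M" using max by (simp add: maximal_left_ideal_def)
  have J: "jacobson \<subseteq> M" using max unfolding jacobson_def by blast
  have "c * s \<in> M" if "c \<in> M" for c s
  proof (rule ccontr)
    assume "c * s \<notin> M"
    then obtain m t where "m \<in> M" "m + t * (c * s) = 1"
      using maximal_left_ideal_add_principal[OF max] by blast
    then have "1 - (t * c) * s \<in> M" by (metis add_diff_cancel_right' mult.assoc)
    with mem_left_ideal_if_one_minus_mult_mem[OF N clean L J left_ideal_mult[OF L that]]
    have "s \<in> M" by blast
    with \<open>c * s \<notin> M\<close> show False using left_ideal_mult[OF L] by blast
  qed
  with L show ?thesis unfolding two_sided_ideal_def right_ideal_def left_ideal_def by blast
qed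

lemma maximal_right_ideal_two_sided:
  fixes M :: "'a::ring_1 set"
  assumes N: "nilpotents \<subseteq> (jacobson :: 'a set)" and clean: "clean_ring TYPE('a)"
    and max: "maximal_right_ideal M"
  shows "two_sided_ideal M"
proof -
  have R: "right_ideal M" using max by (simp add: maximal_right_ideal_def)
  have J: "jacobson \<subseteq> M" using max by (rule jacobson_subset_maximal_right_ideal)
  have "s * c \<in> M" if "c \<in> M" for c s
  proof (rule ccontr)
    assume "s * c \<notin> M"
    then obtain m t where "m \<in> M" "m + (s * c) * t = 1"
      using maximal_right_ideal_add_principal[OF max] by blast
    then have "1 - s * (c * t) \<in> M" by (metis add_diff_cancel_right' mult.assoc)
    with mem_right_ideal_if_one_minus_mult_mem[OF N clean R J right_ideal_mult[OF R that]]
    have "s \<in> M" by blast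
    with \<open>s * c \<notin> M\<close> show False using right_ideal_mult[OF R] by blast
  qed
  with R show ?thesis unfolding two_sided_ideal_def right_ideal_def left_ideal_def by blast
qed

lemma quasi_duo_if_clean_ring:
  assumes "nilpotents \<subseteq> (jacobson :: 'a::ring_1 set)" and "clean_ring TYPE('a)"
  shows "quasi_duo TYPE('a)"
  unfolding quasi_duo_def
  using maximal_left_ideal_two_sided[OF assms] maximal_right_ideal_two_sided[OF assms] by blast

theorem proposition2p9:
  assumes "NJ_symmetric TYPE('a::ring_1)"
    and "exchange_ring TYPE('a)"
  shows "clean_ring TYPE('a) \<and> quasi_duo TYPE('a)"
proof -
  have N: "nilpotents \<subseteq> (jacobson :: 'a set)"
    using assms(1) by (rule nilpotents_subset_jacobson)
  have "clean_ring TYPE('a)"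
    using N assms(2) by (rule clean_ring_if_exchange_ring)
  with N show ?thesis using quasi_duo_if_clean_ring by blast
qed

end
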